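(* Let $(\mathsf L,\mathsf R,\Delta)$ be an n.w.f.s. on $\mathcal{C}$, let $(f,s)\colon X\to Y$ and $(g,t)\colon Y\to Z$ be $\mathsf L$-maps, and let $(gf,u)$ be their composite, where $u=\pi_{gf}\circ E(E(1_X,g),1_Z)\circ E(s,1_Z)\circ t$. Then $(1_X,g)\colon f\to gf$ is a morphism of $\mathsf L$-maps $(f,s)\to(gf,u)$.
   Context: An n.w.f.s. is a functorial factorisation $(E,\lambda,\rho)$ ($E\colon\mathcal{C}^{\mathbf 2}\to\mathcal{C}$ on the arrow category, natural $\lambda\colon\mathrm{dom}\Rightarrow E$, $\rho\colon E\Rightarrow\mathrm{cod}$, $\rho_f\lambda_f=f$) with natural $\sigma_f\colon Ef\to E(\lambda_f)$, $\pi_f\colon E(\rho_f)\to Ef$ satisfying $\sigma_f\lambda_f=\lambda_{\lambda_f}$, $\rho_f\pi_f=\rho_{\rho_f}$, $\rho_{\lambda_f}\sigma_f=1$, $\pi_f\lambda_{\rho_f}=1$, $E(1_X,\rho_f)\sigma_f=1$, $\pi_fE(\lambda_f,1_Y)=1$, $E(1_X,\sigma_f)\sigma_f=\sigma_{\lambda_f}\sigma_f$, $\pi_fE(\pi_f,1_Y)=\pi_f\pi_{\rho_f}$, $\sigma_f\pi_f=\pi_{\lambda_f}E(\sigma_f,\pi_f)\sigma_{\rho_f}$. An $\mathsf L$-map is $(f,s)$ with $s\colon Y\to Ef$, $sf=\lambda_f$, $\rho_fs=1_Y$, $\sigma_fs=E(1_X,s)s$; a morphism $(h,k)\colon(f,s)\to(g',t')$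 is a commuting square with $t'k=E(h,k)s$. Here $E(s,1_Z)$ is $E$ applied to the square $(s,1_Z)\colon g\to g\rho_f$ and $E(1_X,g)$ to the square $(1_X,g)\colon f\to gf$. *)

theory Defs
  imports Main
begin

text \<open>A (small, set-based) category: objects, arrows, domain, codomain,
  identities and composition (Comp C g f = g o f).\<close>

record ('o, 'm) cat =
  Obj  :: "'o set"
  Arr  :: "'m set"
  Dom  :: "'m \<Rightarrow> 'o"
  Cod  :: "'m \<Rightarrow> 'o"
  Id   :: "'o \<Rightarrow> 'm"
  Comp :: "'m \<Rightarrow> 'm \<Rightarrow> 'm"

definition hom :: "('o, 'm) cat \<Rightarrow> 'o \<Rightarrow> 'o \<Rightarrow> 'm set" where
  "hom C x y = {f \<in> Arr C. Dom C f = x \<and> Cod C f = y}"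

locale category =
  fixes C :: "('o, 'm) cat"
  assumes dom_obj: "f \<in> Arr C \<Longrightarrow> Dom C f \<in> Obj C"
    and cod_obj: "f \<in> Arr C \<Longrightarrow> Cod C f \<in> Obj C"
    and id_hom: "x \<in> Obj C \<Longrightarrow> Id C x \<in> hom C x x"
    and comp_hom: "f \<in> hom C x y \<Longrightarrow> g \<in> hom C y z \<Longrightarrow> Comp C g f \<in> hom C x z"
    and id_left: "f \<in> Arr C \<Longrightarrow> Comp C (Id C (Cod C f)) f = f"
    and id_right: "f \<in> Arr C \<Longrightarrow> Comp C f (Id C (Dom C f)) = f"
    and assoc: "f \<in> hom C w x \<Longrightarrow> g \<in> hom C x y \<Longrightarrow> h \<in> hom C y z \<Longrightarrow>
                Comp C h (Comp C g f) = Comp C (Comp C h g) f"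

definition sq :: "('o, 'm) cat \<Rightarrow> 'm \<Rightarrow> 'm \<Rightarrow> 'm \<Rightarrow> 'm \<Rightarrow> bool" where
  "sq C f g h k \<longleftrightarrow> f \<in> Arr C \<and> g \<in> Arr C \<and>
     h \<in> hom C (Dom C f) (Dom C g) \<and> k \<in> hom C (Cod C f) (Cod C g) \<and>
     Comp C g h = Comp C k f"

text \<open>E is a functor from the arrow
  category to C: on objects E f, on a square (h,k) : f \<rightarrow> g the arrow
  EM f g h k = E(h,k) : E f \<rightarrow> E g (source and target arrows are explicit).\<close>

locale functorial_factorisation = category C
  for C :: "('o, 'm) cat" +
  fixes E :: "'m \<Rightarrow> 'o"
    and EM :: "'m \<Rightarrow> 'm \<Rightarrow> 'm \<Rightarrow> 'm \<Rightarrow> 'm"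
    and lam :: "'m \<Rightarrow> 'm"
    and rho :: "'m \<Rightarrow> 'm"
  assumes E_obj: "f \<in> Arr C \<Longrightarrow> E f \<in> Obj C"
    and EM_hom: "sq C f g h k \<Longrightarrow> EM f g h k \<in> hom C (E f) (E g)"
    and EM_id: "f \<in> Arr C \<Longrightarrow> EM f f (Id C (Dom C f)) (Id C (Cod C f)) = Id C (E f)"
    and EM_comp: "sq C f g h k \<Longrightarrow> sq C g g' h' k' \<Longrightarrow>
         EM f g' (Comp C h' h) (Comp C k' k) = Comp C (EM g g' h' k') (EM f g h k)"
    and lam_hom: "f \<in> Arr C \<Longrightarrow> lam f \<in> hom C (Dom C f) (E f)"
    and rho_hom: "f \<in> Arr C \<Longrightarrow> rho f \<in> hom C (E f) (Cod C f)"
    and factor: "f \<in> Arr C \<Longrightarrow> Comp C (rho f) (lam f) = f"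
    and lam_nat: "sq C f g h k \<Longrightarrow> Comp C (EM f g h k) (lam f) = Comp C (lam g) h"
    and rho_nat: "sq C f g h k \<Longrightarrow> Comp C k (rho f) = Comp C (rho g) (EM f g h k)"

locale nwfs = functorial_factorisation C E EM lam rho
  for C :: "('o, 'm) cat" and E EM lam rho +
  fixes sig :: "'m \<Rightarrow> 'm"
    and pii :: "'m \<Rightarrow> 'm"
  assumes sig_hom: "f \<in> Arr C \<Longrightarrow> sig f \<in> hom C (E f) (E (lam f))"
    and pii_hom: "f \<in> Arr C \<Longrightarrow> pii f \<in> hom C (E (rho f)) (E f)"
    and sig_nat: "sq C f g h k \<Longrightarrow>
        Comp C (sig g) (EM f g h k) = Comp C (EM (lam f) (lam g) h (EM f g h k)) (sig f)"
    and pii_nat: "sq C f g h k \<Longrightarrow>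
        Comp C (pii g) (EM (rho f) (rho g) (EM f g h k) k) = Comp C (EM f g h k) (pii f)"
    and ax1: "f \<in> Arr C \<Longrightarrow> Comp C (sig f) (lam f) = lam (lam f)"
    and ax2: "f \<in> Arr C \<Longrightarrow> Comp C (rho f) (pii f) = rho (rho f)"
    and ax3: "f \<in> Arr C \<Longrightarrow> Comp C (rho (lam f)) (sig f) = Id C (E f)"
    and ax4: "f \<in> Arr C \<Longrightarrow> Comp C (pii f) (lam (rho f)) = Id C (E f)"
    and ax5: "f \<in> Arr C \<Longrightarrow>
        Comp C (EM (lam f) f (Id C (Dom C f)) (rho f)) (sig f) = Id C (E f)"
    and ax6: "f \<in> Arr C \<Longrightarrow>
        Comp C (pii f) (EM f (rho f) (lam f) (Id C (Cod C f))) = Id C (E f)"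
    and ax7: "f \<in> Arr C \<Longrightarrow>
        Comp C (EM (lam f) (lam (lam f)) (Id C (Dom C f)) (sig f)) (sig f)
          = Comp C (sig (lam f)) (sig f)"
    and ax8: "f \<in> Arr C \<Longrightarrow>
        Comp C (pii f) (EM (rho (rho f)) (rho f) (pii f) (Id C (Cod C f)))
          = Comp C (pii f) (pii (rho f))"
    and ax9: "f \<in> Arr C \<Longrightarrow>
        Comp C (sig f) (pii f)
          = Comp C (pii (lam f))
              (Comp C (EM (lam (rho f)) (rho (lam f)) (sig f) (pii f)) (sig (rho f)))"

definition Lmap :: "('o, 'm) cat \<Rightarrow> ('m \<Rightarrow> 'o) \<Rightarrow> ('m \<Rightarrow> 'm \<Rightarrow> 'm \<Rightarrow> 'm \<Rightarrow> 'm)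
    \<Rightarrow> ('m \<Rightarrow> 'm) \<Rightarrow> ('m \<Rightarrow> 'm) \<Rightarrow> ('m \<Rightarrow> 'm) \<Rightarrow> 'm \<Rightarrow> 'm \<Rightarrow> bool" where
  "Lmap C E EM lam rho sig f s \<longleftrightarrow>
     f \<in> Arr C \<and> s \<in> hom C (Cod C f) (E f) \<and>
     Comp C s f = lam f \<and>
     Comp C (rho f) s = Id C (Cod C f) \<and>
     Comp C (sig f) s = Comp C (EM f (lam f) (Id C (Dom C f)) s) s"

definition Lmap_mor :: "('o, 'm) cat \<Rightarrow> ('m \<Rightarrow> 'm \<Rightarrow> 'm \<Rightarrow> 'm \<Rightarrow> 'm)
    \<Rightarrow> 'm \<Rightarrow> 'm \<Rightarrow> 'm \<Rightarrow> 'm \<Rightarrow> 'm \<Rightarrow> 'm \<Rightarrow> bool" where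
  "Lmap_mor C EM f s g t h k \<longleftrightarrow>
     sq C f g h k \<and> Comp C t k = Comp C (EM f g h k) s"

end

theory Submission
  imports Defs
begin

text \<open>Write \<open>a = g f\<close>. Precomposing \<open>u\<close> with \<open>g\<close> turns \<open>t g\<close> into \<open>\<lambda>\<^sub>g\<close>; naturality of
  \<open>\<lambda>\<close> along the squares \<open>(s, 1) : g \<rightarrow> g \<rho>\<^sub>f\<close> and \<open>(E(1,g), 1) : g \<rho>\<^sub>f \<rightarrow> \<rho>\<^sub>a\<close> moves
  \<open>\<lambda>\<close> past both \<open>E\<close>-arrows, giving \<open>u g = \<pi>\<^sub>a \<lambda>\<^bsub>\<rho>\<^sub>a\<^esub> E(1,g) s\<close>, and the unit
  law \<open>\<pi>\<^sub>a \<lambda>\<^bsub>\<rho>\<^sub>a\<^esub> = 1\<close> leaves \<open>E(1,g) s\<close>.\<close>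

lemma homD: "a \<in> hom C x y \<Longrightarrow> a \<in> Arr C \<and> Dom C a = x \<and> Cod C a = y"
  by (simp add: hom_def)

context category
begin

lemma sq_comp_left:
  assumes "f \<in> hom C X Y" and "g \<in> hom C Y Z"
  shows "sq C f (Comp C g f) (Id C X) g"
proof -
  have gf: "Comp C g f \<in> hom C X Z"
    using assms comp_hom by blast
  then have "Comp C (Comp C g f) (Id C X) = Comp C g f"
    using id_right by (metis homD)
  then show ?thesis
    unfolding sq_def using assms gf id_hom dom_obj by (auto simp: hom_def)
qed

lemma sq_section:
  assumes g: "g \<in> hom C Y Z" and r: "r \<in> hom C A Y" and s: "s \<in> hom C Y A"
    and rs: "Comp C r s = Id C Y"
  shows "sq C g (Comp C g r) s (Id C Z)"
proof -
  have "Comp C (Comp C g r) s = Comp C g (Comp C r s)"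
    using assoc[OF s r g] by simp
  also have "\<dots> = Comp C (Id C Z) g"
    using rs g id_left id_right by (metis homD)
  finally show ?thesis
    unfolding sq_def using g comp_hom[OF r g] s id_hom cod_obj by (auto simp: hom_def)
qed

end

context functorial_factorisation
begin

lemma sq_EM_rho:
  assumes "sq C f g h k"
  shows "sq C (Comp C k (rho f)) (rho g) (EM f g h k) (Id C (Cod C g))"
proof -
  have f: "f \<in> Arr C" and g: "g \<in> Arr C" and k: "k \<in> hom C (Cod C f) (Cod C g)"
    using assms by (auto simp: sq_def)
  have krf: "Comp C k (rho f) \<in> hom C (E f) (Cod C g)"
    using comp_hom[OF rho_hom[OF f] k] .
  then have "Comp C (Id C (Cod C g)) (Comp C k (rho f)) = Comp C k (rho f)"
    using id_left by (metis homD)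
  then show ?thesis
    unfolding sq_def using krf rho_hom[OF g] EM_hom[OF assms] rho_nat[OF assms]
      id_hom cod_obj[OF g] by (auto simp: hom_def)
qed

lemma EM_comp_lam_section:
  assumes sq: "sq C g g' h k" and t: "t \<in> hom C (Cod C g) (E g)" and tg: "Comp C t g = lam g"
  shows "Comp C (Comp C (EM g g' h k) t) g = Comp C (lam g') h"
proof -
  have g: "g \<in> hom C (Dom C g) (Cod C g)"
    using sq by (simp add: sq_def hom_def)
  have "Comp C (Comp C (EM g g' h k) t) g = Comp C (EM g g' h k) (lam g)"
    using assoc[OF g t EM_hom[OF sq], symmetric] tg by simp
  also have "\<dots> = Comp C (lam g') h"
    using lam_nat[OF sq] .
  finally show ?thesis .
qed

end

context nwfs
begin

lemma pii_EM_rho_lam: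
  assumes sq: "sq C f g h k"
  defines "r \<equiv> Comp C k (rho f)"
  shows "Comp C (Comp C (pii g) (EM r (rho g) (EM f g h k) (Id C (Cod C g)))) (lam r)
    = EM f g h k"
proof -
  have f: "f \<in> Arr C" and g: "g \<in> Arr C" and k: "k \<in> hom C (Cod C f) (Cod C g)"
    using sq by (auto simp: sq_def)
  have r: "r \<in> Arr C"
    unfolding r_def using comp_hom[OF rho_hom[OF f] k] by (simp add: hom_def)
  have sq': "sq C r (rho g) (EM f g h k) (Id C (Cod C g))"
    unfolding r_def using sq_EM_rho[OF sq] .
  have Ehk: "EM f g h k \<in> hom C (E f) (E g)"
    using EM_hom[OF sq] .
  have lam_r: "lam r \<in> hom C (E f) (E r)"
    using lam_hom[OF r] unfolding r_def using comp_hom[OF rho_hom[OF f] k]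
    by (simp add: hom_def)
  have lam_rho: "lam (rho g) \<in> hom C (E g) (E (rho g))"
    using lam_hom rho_hom[OF g] by (simp add: hom_def)
  have "Comp C (Comp C (pii g) (EM r (rho g) (EM f g h k) (Id C (Cod C g)))) (lam r)
      = Comp C (pii g) (Comp C (EM r (rho g) (EM f g h k) (Id C (Cod C g))) (lam r))"
    using assoc[OF lam_r EM_hom[OF sq'] pii_hom[OF g]] by simp
  also have "\<dots> = Comp C (Comp C (pii g) (lam (rho g))) (EM f g h k)"
    using lam_nat[OF sq'] assoc[OF Ehk lam_rho pii_hom[OF g]] by simp
  also have "\<dots> = EM f g h k"
    using ax4[OF g] id_left[of "EM f g h k"] Ehk by (simp add: hom_def)
  finally show ?thesis .
qed

lemma composite_section_comp_right:
  assumes f: "f \<in> hom C X Y" and g: "g \<in> hom C Y Z"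
    and s: "s \<in> hom C Y (E f)" and rs: "Comp C (rho f) s = Id C Y"
    and t: "t \<in> hom C Z (E g)" and tg: "Comp C t g = lam g"
  defines "r \<equiv> Comp C g (rho f)" and "a \<equiv> Comp C g f"
  defines "Eg \<equiv> EM f a (Id C X) g"
  defines "u \<equiv> Comp C (pii a)
    (Comp C (EM r (rho a) Eg (Id C Z)) (Comp C (EM g r s (Id C Z)) t))"
  shows "Comp C u g = Comp C Eg s"
proof -
  define EEg where "EEg = EM r (rho a) Eg (Id C Z)"
  define Es where "Es = EM g r s (Id C Z)"
  have a: "a \<in> hom C X Z"
    unfolding a_def using comp_hom[OF f g] .
  have sq_g: "sq C f a (Id C X) g"
    unfolding a_def using sq_comp_left[OF f g] .
  have rf: "rho f \<in> hom C (E f) Y"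
    using rho_hom f by (simp add: hom_def)
  have sq_s: "sq C g r s (Id C Z)"
    unfolding r_def using sq_section[OF g rf s rs] .
  have sq_Eg: "sq C r (rho a) Eg (Id C Z)"
    using sq_EM_rho[OF sq_g] a unfolding r_def Eg_def by (simp add: hom_def)
  have pi_EEg: "Comp C (pii a) EEg \<in> hom C (E r) (E a)"
    unfolding EEg_def using comp_hom[OF EM_hom[OF sq_Eg] pii_hom] a by (simp add: hom_def)
  have Es_t: "Comp C Es t \<in> hom C Z (E r)"
    unfolding Es_def using comp_hom[OF t EM_hom[OF sq_s]] .
  have lam_r: "lam r \<in> hom C (E f) (E r)"
    unfolding r_def using lam_hom comp_hom[OF rf g] by (simp add: hom_def)
  have "Comp C u g = Comp C (Comp C (pii a) EEg) (Comp C (Comp C Es t) g)"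
    unfolding u_def EEg_def[symmetric] Es_def[symmetric]
    using assoc[OF Es_t EM_hom[OF sq_Eg] pii_hom] assoc[OF g Es_t pi_EEg] a
    by (simp add: EEg_def hom_def)
  also have "\<dots> = Comp C (Comp C (Comp C (pii a) EEg) (lam r)) s"
    unfolding Es_def using EM_comp_lam_section[OF sq_s] t tg assoc[OF s lam_r pi_EEg] g
    by (simp add: hom_def)
  also have "\<dots> = Comp C Eg s"
    unfolding EEg_def Eg_def r_def using pii_EM_rho_lam[OF sq_g] a by (simp add: hom_def)
  finally show ?thesis .
qed

end

theorem lemma6p16:
  fixes C :: "('o, 'm) cat"
  assumes "nwfs C E EM lam rho sig pii"
    and "Lmap C E EM lam rho sig f s"
    and "Lmap C E EM lam rho sig g t"
    and "Cod C f = Dom C g"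
    and "u = Comp C (pii (Comp C g f))
               (Comp C (EM (Comp C g (rho f)) (rho (Comp C g f))
                           (EM f (Comp C g f) (Id C (Dom C f)) g) (Id C (Cod C g)))
                  (Comp C (EM g (Comp C g (rho f)) s (Id C (Cod C g))) t))"
  shows "Lmap_mor C EM f s (Comp C g f) u (Id C (Dom C f)) g"
proof -
  interpret nwfs C E EM lam rho sig pii by (rule assms(1))
  have f: "f \<in> hom C (Dom C f) (Cod C f)" and g: "g \<in> hom C (Cod C f) (Cod C g)"
    and s: "s \<in> hom C (Cod C f) (E f)" and rs: "Comp C (rho f) s = Id C (Cod C f)"
    and t: "t \<in> hom C (Cod C g) (E g)" and tg: "Comp C t g = lam g"
    using assms(2-4) by (auto simp: Lmap_def hom_def)
  show ?thesis
    unfolding Lmap_mor_def assms(5)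
    using sq_comp_left[OF f g] composite_section_comp_right[OF f g s rs t tg] by simp
qed

end
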